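(* Let $\mathbf f\in H^{3/2}(\mathbb{R}/\mathbb{Z},\mathbb{R}^n)$, $m\ge2$, and $0\le\theta_1<\dots<\theta_m<1$, with indices taken cyclically ($\theta_{k+m}=\theta_k+1$), and assume the equilateral condition $\|\Delta_k\mathbf f\|=L_m/m$ for all $k=1,\dots,m$, where $L_m=\sum_{k=1}^m\|\Delta_k\mathbf f\|$. Then for every $i$, \[ \|\Delta_i\mathbf f-\Delta_{i+1}\mathbf f\|\le 2\,(\theta_{i+2}-\theta_i)\,[\dot{\mathbf f}]_{H^{1/2}([\theta_i,\theta_{i+2}]^2)} . \]
   Context: $\Delta_i^j\mathbf f=\mathbf f(\theta_j)-\mathbf f(\theta_i)$ and $\Delta_i\mathbf f=\Delta_i^{i+1}\mathbf f$, where $\mathbf f$ is regarded as a $1$-periodic function on $\mathbb{R}$. For an interval $[a,b]\subset\mathbb{R}$ and a $1$-periodic $\mathbb{R}^n$-valued function $\mathbf u$, $[\mathbf u]_{H^{1/2}([a,b]^2)}=\Big(\int_a^b\int_a^b\frac{\|\mathbf u(\theta)-\mathbf u(\theta')\|^2}{|\theta-\theta'|^2}d\theta\,d\theta'\Big)^{1/2}$. *)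

theory Defs
  imports "HOL-Analysis.Analysis"
begin

text \<open>Distance on the circle R/Z (for arguments in [0,1]).\<close>
definition circ_dist :: "real \<Rightarrow> real \<Rightarrow> real" where
  "circ_dist x y = min \<bar>x - y\<bar> (1 - \<bar>x - y\<bar>)"

definition H12_torus_sq :: "(real \<Rightarrow> 'a::real_normed_vector) \<Rightarrow> ennreal" where
  "H12_torus_sq u =
     (\<integral>\<^sup>+ z \<in> {0..1::real} \<times> {0..1::real}.
        ennreal ((norm (u (fst z) - u (snd z)))\<^sup>2 / (circ_dist (fst z) (snd z))\<^sup>2)
      \<partial>(lborel \<Otimes>\<^sub>M lborel))"

definition H12_sq :: "real \<Rightarrow> real \<Rightarrow> (real \<Rightarrow> 'a::real_normed_vector) \<Rightarrow> ennreal" where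
  "H12_sq a b u =
     (\<integral>\<^sup>+ z \<in> {a..b} \<times> {a..b}.
        ennreal ((norm (u (fst z) - u (snd z)))\<^sup>2 / (fst z - snd z)\<^sup>2)
      \<partial>(lborel \<Otimes>\<^sub>M lborel))"

definition H12_seminorm :: "real \<Rightarrow> real \<Rightarrow> (real \<Rightarrow> 'a::real_normed_vector) \<Rightarrow> real" where
  "H12_seminorm a b u = sqrt (enn2real (H12_sq a b u))"

text \<open>f \<in> H^{3/2}(R/Z, R^n) with (weak) derivative g: f is 1-periodic and the
  integral of g, g is 1-periodic, measurable, in L^2 of a period, and
  g \<in> H^{1/2}(R/Z).\<close>
definition H32_with_deriv :: "(real \<Rightarrow> real ^ 'n) \<Rightarrow> (real \<Rightarrow> real ^ 'n) \<Rightarrow> bool" where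
  "H32_with_deriv f g \<longleftrightarrow>
     (\<forall>x. f (x + 1) = f x) \<and> (\<forall>x. g (x + 1) = g x) \<and>
     g \<in> borel_measurable lborel \<and>
     (\<integral>\<^sup>+ x \<in> {0..1}. ennreal ((norm (g x))\<^sup>2) \<partial>lborel) < \<infinity> \<and>
     (\<forall>a b. a \<le> b \<longrightarrow> (g has_integral (f b - f a)) {a..b}) \<and>
     H12_torus_sq g < \<infinity>"

text \<open>Cyclic extension of nodes theta_1..theta_m: theta_{k+m} = theta_k + 1 (k \<ge> 1).\<close>
definition theta_ext :: "nat \<Rightarrow> (nat \<Rightarrow> real) \<Rightarrow> nat \<Rightarrow> real" where
  "theta_ext m \<theta> k = \<theta> ((k - 1) mod m + 1) + real ((k - 1) div m)"

definition Delta :: "nat \<Rightarrow> (nat \<Rightarrow> real) \<Rightarrow> (real \<Rightarrow> 'a::real_normed_vector) \<Rightarrow> nat \<Rightarrow> 'a" where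
  "Delta m \<theta> f i = f (theta_ext m \<theta> (i + 1)) - f (theta_ext m \<theta> i)"

end

theory Submission
  imports Defs "HOL-Library.Periodic_Fun"
begin

(* Write a < b < c for theta_i < theta_(i+1) < theta_(i+2), D1 = f b - f a, D2 = f c - f b and
   w = D1 / (b - a) - D2 / (c - b). Since |D1| = |D2|, |D1 - D2|^2 <= (b - a) (c - b) |w|^2.
   As f' = g, (b - a) (c - b) |w|^2 = w . ((c - b) D1 - (b - a) D2) is the integral of w . (g s - g t)
   over [a,b] x [b,c], hence at most |w| times the integral of |g s - g t| there, and Cauchy-Schwarz
   with the weight |s - t| <= c - a bounds that integral by (c - a) sqrt ((b - a) (c - b)) [g].
   Hence |D1 - D2| <= (c - a) [g], even without the factor 2.
   The seminorm [g] on [a,c]^2 is finite because c - a <= 1: then [a,c]^2 is covered by four integer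
   translates of the unit square, on which the circle distance is at most |s - t|. *)

lemma has_integral_abs_le_nn_integral:
  fixes \<psi> :: "real \<Rightarrow> real"
  assumes [measurable]: "\<psi> \<in> borel_measurable lborel" "S \<in> sets lborel"
    and I: "(\<psi> has_integral I) S"
  shows "ennreal \<bar>I\<bar> \<le> (\<integral>\<^sup>+x\<in>S. ennreal \<bar>\<psi> x\<bar> \<partial>lborel)"
proof (cases "(\<integral>\<^sup>+x\<in>S. ennreal \<bar>\<psi> x\<bar> \<partial>lborel) = \<infinity>")
  case False
  have nn: "(\<integral>\<^sup>+x. ennreal \<bar>indicator S x * \<psi> x\<bar> \<partial>lborel) = (\<integral>\<^sup>+x\<in>S. ennreal \<bar>\<psi> x\<bar> \<partial>lborel)"
    by (intro nn_integral_cong) (auto simp: indicator_def)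
  have int: "integrable lborel (\<lambda>x. indicator S x * \<psi> x)"
    using False by (intro integrableI_bounded) (auto simp: nn top.not_eq_extremum)
  have "((\<lambda>x. indicator S x * \<psi> x) has_integral I) UNIV"
    using I by (simp add: indicator_times_eq_if has_integral_restrict_UNIV)
  then have "I = (\<integral>x. indicator S x * \<psi> x \<partial>lborel)"
    using has_integral_integral_lborel[OF int] by (rule has_integral_unique)
  then have "\<bar>I\<bar> \<le> (\<integral>x. \<bar>indicator S x * \<psi> x\<bar> \<partial>lborel)"
    by (simp add: integral_abs_bound)
  then have "ennreal \<bar>I\<bar> \<le> ennreal (\<integral>x. \<bar>indicator S x * \<psi> x\<bar> \<partial>lborel)"
    by (rule ennreal_leI)
  also have "\<dots> = (\<integral>\<^sup>+x\<in>S. ennreal \<bar>\<psi> x\<bar> \<partial>lborel)"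
    using int by (simp add: nn_integral_eq_integral[symmetric] nn)
  finally show ?thesis .
qed simp

lemma abs_second_difference_le_double_integral:
  fixes \<phi> F :: "real \<Rightarrow> real"
  assumes [measurable]: "\<phi> \<in> borel_measurable lborel"
    and F: "\<And>p q. p \<le> q \<Longrightarrow> (\<phi> has_integral (F q - F p)) {p..q}"
    and "a \<le> b" "b \<le> c"
  shows "ennreal \<bar>(c - b) * (F b - F a) - (b - a) * (F c - F b)\<bar>
    \<le> (\<integral>\<^sup>+z\<in>{a..b} \<times> {b..c}. ennreal \<bar>\<phi> (fst z) - \<phi> (snd z)\<bar> \<partial>(lborel \<Otimes>\<^sub>M lborel))"
proof -
  have inner: "ennreal \<bar>(c - b) * \<phi> s - (F c - F b)\<bar>
      \<le> (\<integral>\<^sup>+t\<in>{b..c}. ennreal \<bar>\<phi> s - \<phi> t\<bar> \<partial>lborel)" for s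
  proof (rule has_integral_abs_le_nn_integral)
    show "((\<lambda>t. \<phi> s - \<phi> t) has_integral (c - b) * \<phi> s - (F c - F b)) {b..c}"
      using has_integral_diff[OF has_integral_const_real[of "\<phi> s" b c] F[of b c]] \<open>b \<le> c\<close> by simp
  qed simp_all
  have "ennreal \<bar>(c - b) * (F b - F a) - (b - a) * (F c - F b)\<bar>
      \<le> (\<integral>\<^sup>+s\<in>{a..b}. ennreal \<bar>(c - b) * \<phi> s - (F c - F b)\<bar> \<partial>lborel)"
  proof (rule has_integral_abs_le_nn_integral)
    show "((\<lambda>s. (c - b) * \<phi> s - (F c - F b)) has_integral (c - b) * (F b - F a) - (b - a) * (F c - F b)) {a..b}"
      using has_integral_diff[OF has_integral_mult_right[where c="c - b", OF F[of a b]]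
          has_integral_const_real[of "F c - F b" a b]] \<open>a \<le> b\<close>
      by simp
  qed simp_all
  also have "\<dots> \<le> (\<integral>\<^sup>+s\<in>{a..b}. (\<integral>\<^sup>+t\<in>{b..c}. ennreal \<bar>\<phi> s - \<phi> t\<bar> \<partial>lborel) \<partial>lborel)"
    by (intro nn_integral_mono mult_right_mono inner) simp
  also have "\<dots> = (\<integral>\<^sup>+s. (\<integral>\<^sup>+t. ennreal \<bar>\<phi> s - \<phi> t\<bar> * indicator ({a..b} \<times> {b..c}) (s, t)
      \<partial>lborel) \<partial>lborel)"
    by (subst nn_integral_multc[symmetric]) (auto simp: indicator_times mult_ac intro!: nn_integral_cong)
  also have "\<dots> = (\<integral>\<^sup>+z\<in>{a..b} \<times> {b..c}. ennreal \<bar>\<phi> (fst z) - \<phi> (snd z)\<bar> \<partial>(lborel \<Otimes>\<^sub>M lborel))"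
    by (subst lborel.nn_integral_fst[symmetric]) simp_all
  finally show ?thesis .
qed

lemma inner_second_difference_le_double_integral:
  fixes f g :: "real \<Rightarrow> 'a::euclidean_space" and w :: 'a
  assumes [measurable]: "g \<in> borel_measurable borel"
    and f_integral: "\<And>p q. p \<le> q \<Longrightarrow> (g has_integral (f q - f p)) {p..q}"
    and "a \<le> b" "b \<le> c"
  shows "ennreal \<bar>w \<bullet> ((c - b) *\<^sub>R (f b - f a) - (b - a) *\<^sub>R (f c - f b))\<bar>
    \<le> ennreal (norm w) *
      (\<integral>\<^sup>+z\<in>{a..b} \<times> {b..c}. ennreal (norm (g (fst z) - g (snd z))) \<partial>(lborel \<Otimes>\<^sub>M lborel))"
proof -
  let ?R = "{a..b} \<times> {b..c}"
  have w_integral: "((\<lambda>x. w \<bullet> g x) has_integral (w \<bullet> f q - w \<bullet> f p)) {p..q}" if "p \<le> q" for p q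
    using has_integral_linear[OF f_integral[OF that] bounded_linear_inner_right[of w]]
    by (simp add: o_def inner_diff_right)
  have "ennreal \<bar>w \<bullet> ((c - b) *\<^sub>R (f b - f a) - (b - a) *\<^sub>R (f c - f b))\<bar>
      \<le> (\<integral>\<^sup>+z\<in>?R. ennreal \<bar>w \<bullet> g (fst z) - w \<bullet> g (snd z)\<bar> \<partial>(lborel \<Otimes>\<^sub>M lborel))"
    using abs_second_difference_le_double_integral[of "\<lambda>x. w \<bullet> g x" "\<lambda>x. w \<bullet> f x" a b c]
      w_integral \<open>a \<le> b\<close> \<open>b \<le> c\<close> by (simp add: inner_diff_right)
  also have "\<dots> \<le> (\<integral>\<^sup>+z\<in>?R. ennreal (norm w) * ennreal (norm (g (fst z) - g (snd z))) \<partial>(lborel \<Otimes>\<^sub>M lborel))"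
  proof (intro nn_integral_mono mult_right_mono)
    fix z :: "real \<times> real"
    have "\<bar>w \<bullet> g (fst z) - w \<bullet> g (snd z)\<bar> \<le> norm w * norm (g (fst z) - g (snd z))"
      unfolding inner_diff_right[symmetric] by (rule Cauchy_Schwarz_ineq2)
    then show "ennreal \<bar>w \<bullet> g (fst z) - w \<bullet> g (snd z)\<bar>
        \<le> ennreal (norm w) * ennreal (norm (g (fst z) - g (snd z)))"
      by (simp add: ennreal_mult[symmetric] ennreal_leI)
  qed simp
  also have "\<dots> = ennreal (norm w) * (\<integral>\<^sup>+z\<in>?R. ennreal (norm (g (fst z) - g (snd z))) \<partial>(lborel \<Otimes>\<^sub>M lborel))"
    by (simp add: nn_integral_cmult[symmetric] mult.assoc)
  finally show ?thesis .
qed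

lemma double_integral_norm_diff_sq_le_H12_sq:
  fixes g :: "real \<Rightarrow> 'a::euclidean_space"
  assumes [measurable]: "g \<in> borel_measurable borel" and "a \<le> b" "b \<le> c"
  shows "(\<integral>\<^sup>+z\<in>{a..b} \<times> {b..c}. ennreal (norm (g (fst z) - g (snd z))) \<partial>(lborel \<Otimes>\<^sub>M lborel))\<^sup>2
    \<le> H12_sq a c g * ennreal ((c - a)\<^sup>2 * ((b - a) * (c - b)))"
proof -
  let ?R = "{a..b} \<times> {b..c}"
  define Q where "Q z = ennreal (indicator ?R z * norm (g (fst z) - g (snd z)) / \<bar>fst z - snd z\<bar>)" for z
  define D where "D z = ennreal (indicator ?R z * \<bar>fst z - snd z\<bar>)" for z
  have [measurable]: "Q \<in> borel_measurable (lborel \<Otimes>\<^sub>M lborel)"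
    unfolding Q_def by measurable
  have [measurable]: "D \<in> borel_measurable (lborel \<Otimes>\<^sub>M lborel)"
    unfolding D_def by measurable
  have QD: "ennreal (norm (g (fst z) - g (snd z))) * indicator ?R z = Q z * D z" for z :: "real \<times> real"
    by (cases "fst z = snd z") (simp_all add: Q_def D_def indicator_def ennreal_mult[symmetric])
  have Q2: "(\<integral>\<^sup>+z. Q z ^ 2 \<partial>(lborel \<Otimes>\<^sub>M lborel)) \<le> H12_sq a c g"
    unfolding H12_sq_def
  proof (intro nn_integral_mono)
    fix z :: "real \<times> real"
    show "Q z ^ 2 \<le> ennreal ((norm (g (fst z) - g (snd z)))\<^sup>2 / (fst z - snd z)\<^sup>2)
        * indicator ({a..c} \<times> {a..c}) z"
    proof (cases "z \<in> ?R")
      case True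
      then have "z \<in> {a..c} \<times> {a..c}"
        using \<open>a \<le> b\<close> \<open>b \<le> c\<close> by auto
      with True show ?thesis
        by (simp add: Q_def ennreal_power power_divide)
    qed (simp add: Q_def)
  qed
  have D2: "(\<integral>\<^sup>+z. D z ^ 2 \<partial>(lborel \<Otimes>\<^sub>M lborel)) \<le> ennreal ((c - a)\<^sup>2 * ((b - a) * (c - b)))"
  proof -
    have "(\<integral>\<^sup>+z. D z ^ 2 \<partial>(lborel \<Otimes>\<^sub>M lborel))
        \<le> (\<integral>\<^sup>+z. ennreal ((c - a)\<^sup>2) * indicator ?R z \<partial>(lborel \<Otimes>\<^sub>M lborel))"
    proof (intro nn_integral_mono)
      fix z :: "real \<times> real"
      have "z \<in> ?R \<Longrightarrow> \<bar>fst z - snd z\<bar>\<^sup>2 \<le> (c - a)\<^sup>2"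
        by (intro power_mono) auto
      then show "D z ^ 2 \<le> ennreal ((c - a)\<^sup>2) * indicator ?R z"
        by (auto simp: D_def ennreal_power indicator_def intro: ennreal_leI)
    qed
    also have "\<dots> = ennreal ((c - a)\<^sup>2) * (ennreal (b - a) * ennreal (c - b))"
      using \<open>a \<le> b\<close> \<open>b \<le> c\<close>
      by (simp add: nn_integral_cmult_indicator lborel.emeasure_pair_measure_Times)
    finally show ?thesis
      using \<open>a \<le> b\<close> \<open>b \<le> c\<close> by (simp add: ennreal_mult[symmetric])
  qed
  have "(\<integral>\<^sup>+z\<in>?R. ennreal (norm (g (fst z) - g (snd z))) \<partial>(lborel \<Otimes>\<^sub>M lborel))\<^sup>2
      = (\<integral>\<^sup>+z. Q z * D z \<partial>(lborel \<Otimes>\<^sub>M lborel))\<^sup>2"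
    by (simp add: QD)
  also have "\<dots> \<le> (\<integral>\<^sup>+z. Q z ^ 2 \<partial>(lborel \<Otimes>\<^sub>M lborel))
      * (\<integral>\<^sup>+z. D z ^ 2 \<partial>(lborel \<Otimes>\<^sub>M lborel))"
    by (rule Cauchy_Schwarz_nn_integral) simp_all
  also have "\<dots> \<le> H12_sq a c g * ennreal ((c - a)\<^sup>2 * ((b - a) * (c - b)))"
    by (rule mult_mono[OF Q2 D2]) simp_all
  finally show ?thesis .
qed

lemma norm_diff_sq_le_if_norm_eq:
  fixes u v :: "'a::real_inner" and s t :: real
  assumes "s > 0" "t > 0" "norm u = norm v"
  shows "(norm (u - v))\<^sup>2 \<le> s * t * (norm (u /\<^sub>R s - v /\<^sub>R t))\<^sup>2"
proof -
  have vv: "v \<bullet> v = u \<bullet> u"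
    using assms(3) by (metis power2_norm_eq_inner)
  have "(norm (u /\<^sub>R s - v /\<^sub>R t))\<^sup>2 = (u \<bullet> u) / s\<^sup>2 + (u \<bullet> u) / t\<^sup>2 - 2 * (u \<bullet> v) / (s * t)"
    unfolding power2_norm_eq_inner
    by (simp add: inner_diff_left inner_diff_right inner_commute vv power2_eq_square
        divide_inverse algebra_simps)
  moreover have "(norm (u - v))\<^sup>2 = 2 * (u \<bullet> u) - 2 * (u \<bullet> v)"
    by (simp add: power2_norm_eq_inner inner_diff_left inner_diff_right inner_commute vv)
  moreover have "s * t * ((u \<bullet> u) / s\<^sup>2 + (u \<bullet> u) / t\<^sup>2 - 2 * (u \<bullet> v) / (s * t))
      = 2 * (u \<bullet> u) - 2 * (u \<bullet> v) + (u \<bullet> u) * (s - t)\<^sup>2 / (s * t)"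
    using assms(1,2) by (simp add: field_simps power2_eq_square)
  ultimately have "s * t * (norm (u /\<^sub>R s - v /\<^sub>R t))\<^sup>2 = (norm (u - v))\<^sup>2 + (u \<bullet> u) * (s - t)\<^sup>2 / (s * t)"
    by simp
  moreover have "(u \<bullet> u) * (s - t)\<^sup>2 / (s * t) \<ge> 0"
    using assms(1,2) by simp
  ultimately show ?thesis by simp
qed

lemma le_mult_H12_seminorm:
  assumes "ennreal (x\<^sup>2) \<le> H12_sq a b u * ennreal (y\<^sup>2)" "H12_sq a b u < \<infinity>" "0 \<le> x" "0 \<le> y"
  shows "x \<le> y * H12_seminorm a b u"
proof (rule power2_le_imp_le)
  have "ennreal (x\<^sup>2) \<le> ennreal (enn2real (H12_sq a b u)) * ennreal (y\<^sup>2)"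
    using assms(1,2) by simp
  then have "x\<^sup>2 \<le> enn2real (H12_sq a b u) * y\<^sup>2"
    by (simp add: ennreal_mult[symmetric] ennreal_le_iff)
  then show "x\<^sup>2 \<le> (y * H12_seminorm a b u)\<^sup>2"
    by (simp add: H12_seminorm_def power_mult_distrib mult.commute)
  show "0 \<le> y * H12_seminorm a b u"
    using assms(4) by (simp add: H12_seminorm_def)
qed

lemma norm_second_difference_le_H12_seminorm:
  fixes f g :: "real \<Rightarrow> 'a::euclidean_space"
  assumes g_meas: "g \<in> borel_measurable borel"
    and f_integral: "\<And>p q. p \<le> q \<Longrightarrow> (g has_integral (f q - f p)) {p..q}"
    and "a < b" "b < c"
    and norm_eq: "norm (f b - f a) = norm (f c - f b)"
    and finite: "H12_sq a c g < \<infinity>"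
  shows "norm ((f b - f a) - (f c - f b)) \<le> (c - a) * H12_seminorm a c g"
proof -
  define w where "w = (f b - f a) /\<^sub>R (b - a) - (f c - f b) /\<^sub>R (c - b)"
  define X where "X = ennreal ((b - a) * (c - b) * (norm w)\<^sup>2)"
  define J where "J = (\<integral>\<^sup>+z\<in>{a..b} \<times> {b..c}. ennreal (norm (g (fst z) - g (snd z))) \<partial>(lborel \<Otimes>\<^sub>M lborel))"
  define H where "H = H12_sq a c g"
  have inverses: "(b - a) * (c - b) * inverse (b - a) = c - b" "(b - a) * (c - b) * inverse (c - b) = b - a"
    using \<open>a < b\<close> \<open>b < c\<close> by simp_all
  have "(c - b) *\<^sub>R (f b - f a) - (b - a) *\<^sub>R (f c - f b) = ((b - a) * (c - b)) *\<^sub>R w"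
    unfolding w_def scaleR_diff_right scaleR_scaleR inverses ..
  then have X_le: "X \<le> ennreal (norm w) * J"
    using inner_second_difference_le_double_integral[OF g_meas f_integral, of a b c w] \<open>a < b\<close> \<open>b < c\<close>
    by (simp add: X_def J_def power2_norm_eq_inner)
  have "X * X \<le> X * (H * ennreal ((c - a)\<^sup>2))"
  proof -
    have "X * X \<le> (ennreal (norm w) * J) * (ennreal (norm w) * J)"
      using X_le by (intro mult_mono) simp_all
    also have "\<dots> = ennreal ((norm w)\<^sup>2) * J\<^sup>2"
      by (simp add: power2_eq_square ennreal_mult[symmetric] mult_ac)
    also have "\<dots> \<le> ennreal ((norm w)\<^sup>2) * (H * ennreal ((c - a)\<^sup>2 * ((b - a) * (c - b))))"
      unfolding J_def H_def using \<open>a < b\<close> \<open>b < c\<close>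
      by (intro mult_left_mono double_integral_norm_diff_sq_le_H12_sq g_meas) simp_all
    also have "\<dots> = X * (H * ennreal ((c - a)\<^sup>2))"
      using \<open>a < b\<close> \<open>b < c\<close> by (simp add: X_def ennreal_mult[symmetric] mult_ac)
    finally show ?thesis .
  qed
  then have "X \<le> H * ennreal ((c - a)\<^sup>2)"
    by (cases "X = 0") (simp_all add: X_def ennreal_mult_le_mult_iff)
  moreover have "ennreal ((norm ((f b - f a) - (f c - f b)))\<^sup>2) \<le> X"
    unfolding X_def w_def using \<open>a < b\<close> \<open>b < c\<close> norm_eq
    by (intro ennreal_leI norm_diff_sq_le_if_norm_eq) simp_all
  ultimately show ?thesis
    using finite \<open>a < b\<close> \<open>b < c\<close> unfolding H_def
    by (intro le_mult_H12_seminorm) auto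
qed

lemma nn_integral_lborel_translate:
  fixes h :: "'a::euclidean_space \<Rightarrow> ennreal"
  assumes [measurable]: "h \<in> borel_measurable borel"
  shows "(\<integral>\<^sup>+x. h (t + x) \<partial>lborel) = (\<integral>\<^sup>+x. h x \<partial>lborel)"
proof -
  have "(\<integral>\<^sup>+x. h x \<partial>lborel) = (\<integral>\<^sup>+x. h x \<partial>distr lborel borel ((+) t))"
    by (simp add: lborel_distr_plus)
  also have "\<dots> = (\<integral>\<^sup>+x. h (t + x) \<partial>lborel)"
    by (subst nn_integral_distr) simp_all
  finally show ?thesis ..
qed

lemma circ_dist_le_abs_diff:
  fixes x y :: real and j l :: int
  assumes "\<bar>x - y\<bar> \<le> 1" "x - j \<in> {0..1}" "y - l \<in> {0..1}"
  shows "circ_dist (x - j) (y - l) \<le> \<bar>x - y\<bar>"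
proof -
  consider "j = l" | "j \<ge> l + 1" | "l \<ge> j + 1" by linarith
  then show ?thesis
  proof cases
    case 1
    then show ?thesis by (simp add: circ_dist_def)
  next
    case 2
    then have "real_of_int j \<ge> real_of_int l + 1" by linarith
    then show ?thesis using assms unfolding circ_dist_def by (auto simp: abs_if min_def)
  next
    case 3
    then have "real_of_int l \<ge> real_of_int j + 1" by linarith
    then show ?thesis using assms unfolding circ_dist_def by (auto simp: abs_if min_def)
  qed
qed

lemma H12_integrand_le_torus_integrand:
  fixes g :: "real \<Rightarrow> 'a::real_normed_vector" and x y :: real and j l :: int
  assumes "periodic_fun_simple' g"
    and "\<bar>x - y\<bar> \<le> 1" and x: "x - j \<in> {0..1}" and y: "y - l \<in> {0..1}"
  shows "(norm (g x - g y))\<^sup>2 / (x - y)\<^sup>2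
    \<le> (norm (g (x - j) - g (y - l)))\<^sup>2 / (circ_dist (x - j) (y - l))\<^sup>2"
proof -
  interpret periodic_fun_simple' g by fact
  have shift: "g (x - j) = g x" "g (y - l) = g y"
    using minus_of_int by simp_all
  have circ: "circ_dist (x - j) (y - l) \<le> \<bar>x - y\<bar>"
    using circ_dist_le_abs_diff assms(2-4) by blast
  show ?thesis
  proof (cases "circ_dist (x - j) (y - l) = 0")
    case True
    \<comment> \<open>the right-hand side is then a division by zero, so g x = g y is needed:
      the two points coincide on the circle, possibly as the endpoints 0 and 1\<close>
    then have "x - j = y - l \<or> (x - j = 0 \<and> y - l = 1) \<or> (x - j = 1 \<and> y - l = 0)"
      using x y unfolding circ_dist_def by (auto simp: min_def abs_if split: if_splits)
    then have "g (x - j) = g (y - l)"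
      using of_1 by (elim disjE) simp_all
    then have "g x = g y"
      using shift by simp
    then show ?thesis by simp
  next
    case False
    moreover have "0 \<le> circ_dist (x - j) (y - l)"
      using x y by (auto simp: circ_dist_def)
    ultimately have "0 < circ_dist (x - j) (y - l)"
      by simp
    then have le: "(circ_dist (x - j) (y - l))\<^sup>2 \<le> (x - y)\<^sup>2" and pos: "0 < (circ_dist (x - j) (y - l))\<^sup>2"
      using circ by (metis abs_ge_zero less_imp_le power2_abs power_mono, simp)
    have "0 < (x - y)\<^sup>2"
      using le pos by linarith
    then show ?thesis
      unfolding shift by (intro divide_left_mono[OF le] mult_pos_pos pos) simp_all
  qed
qed

lemma H12_sq_less_top_if_periodic:
  fixes g :: "real \<Rightarrow> 'a::euclidean_space"
  assumes [measurable]: "g \<in> borel_measurable borel" and per: "periodic_fun_simple' g"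
    and torus: "H12_torus_sq g < \<infinity>" and "a \<le> c" "c - a \<le> 1"
  shows "H12_sq a c g < \<infinity>"
proof -
  define T where "T z = ennreal ((norm (g (fst z) - g (snd z)))\<^sup>2 / (circ_dist (fst z) (snd z))\<^sup>2)
      * indicator ({0..1} \<times> {0..1}) z" for z :: "real \<times> real"
  have "T \<in> borel_measurable (lborel \<Otimes>\<^sub>M lborel)"
    unfolding T_def circ_dist_def by measurable
  then have T_meas [measurable]: "T \<in> borel_measurable borel"
    by (simp add: lborel_prod)
  obtain k :: int where k: "real_of_int k \<le> a" "a < real_of_int k + 1"
    by (rule that[of "\<lfloor>a\<rfloor>"]) linarith+
  define S where "S = {k, k + 1} \<times> {k, k + 1}"
  define shift :: "int \<times> int \<Rightarrow> real \<times> real"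
    where "shift p = (- of_int (fst p), - of_int (snd p))" for p
  have cover: "ennreal ((norm (g x - g y))\<^sup>2 / (x - y)\<^sup>2) * indicator ({a..c} \<times> {a..c}) (x, y)
      \<le> (\<Sum>p\<in>S. T (shift p + (x, y)))" for x y
  proof (cases "(x, y) \<in> {a..c} \<times> {a..c}")
    case True
    define j where "j = (if x \<le> k + 1 then k else k + 1)"
    define l where "l = (if y \<le> k + 1 then k else k + 1)"
    have x: "x - j \<in> {0..1}" and y: "y - l \<in> {0..1}" and "\<bar>x - y\<bar> \<le> 1"
      using True k \<open>c - a \<le> 1\<close> by (auto simp: j_def l_def)
    have "ennreal ((norm (g x - g y))\<^sup>2 / (x - y)\<^sup>2) * indicator ({a..c} \<times> {a..c}) (x, y)
        \<le> ennreal ((norm (g (x - j) - g (y - l)))\<^sup>2 / (circ_dist (x - j) (y - l))\<^sup>2)"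
      using True by (simp add: ennreal_leI H12_integrand_le_torus_integrand[OF per \<open>\<bar>x - y\<bar> \<le> 1\<close> x y])
    also have "\<dots> = T (shift (j, l) + (x, y))"
      using x y by (simp add: T_def shift_def)
    also have "\<dots> \<le> (\<Sum>p\<in>S. T (shift p + (x, y)))"
      by (rule member_le_sum) (auto simp: S_def j_def l_def)
    finally show ?thesis .
  qed simp
  have "H12_sq a c g \<le> (\<integral>\<^sup>+z. (\<Sum>p\<in>S. T (shift p + z)) \<partial>(lborel \<Otimes>\<^sub>M lborel))"
    unfolding H12_sq_def by (intro nn_integral_mono) (auto simp: cover split_paired_all)
  also have "\<dots> = (\<Sum>p\<in>S. (\<integral>\<^sup>+z. T (shift p + z) \<partial>lborel))"
    by (simp add: lborel_prod nn_integral_sum)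
  also have "\<dots> = (\<Sum>p\<in>S. (\<integral>\<^sup>+z. T z \<partial>lborel))"
    by (simp add: nn_integral_lborel_translate)
  also have "\<dots> = (\<Sum>p\<in>S. H12_torus_sq g)"
    by (simp add: H12_torus_sq_def T_def lborel_prod)
  also have "\<dots> < \<infinity>"
    using torus by (simp add: S_def ennreal_mult_less_top)
  finally show ?thesis .
qed

lemma theta_ext_add_mult:
  assumes "0 < m" "1 \<le> k"
  shows "theta_ext m \<theta> (k + m * n) = theta_ext m \<theta> k + real n"
proof -
  obtain j where "k = Suc j"
    using assms by (cases k) auto
  then show ?thesis
    using assms by (simp add: theta_ext_def)
qed

lemma Delta_eq_Delta_mod:
  assumes "periodic_fun_simple' f" "0 < m" "1 \<le> k"
  shows "Delta m \<theta> f k = Delta m \<theta> f ((k - 1) mod m + 1)"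
proof -
  interpret periodic_fun_simple' f by fact
  define r where "r = (k - 1) mod m + 1"
  define q where "q = (k - 1) div m"
  have "k = r + m * q" "k + 1 = (r + 1) + m * q"
    using \<open>1 \<le> k\<close> by (simp_all add: r_def q_def)
  moreover have "1 \<le> r" "1 \<le> r + 1"
    by (simp_all add: r_def)
  ultimately have "theta_ext m \<theta> k = theta_ext m \<theta> r + real q"
      "theta_ext m \<theta> (k + 1) = theta_ext m \<theta> (r + 1) + real q"
    using theta_ext_add_mult[OF \<open>0 < m\<close>] by metis+
  then have "Delta m \<theta> f k = Delta m \<theta> f r"
    by (simp add: Delta_def plus_of_nat)
  then show ?thesis
    by (simp only: r_def)
qed

lemma norm_Delta_eq_if_equilateral:
  assumes "periodic_fun_simple' f" "0 < m"
    and equilateral: "\<And>j. 1 \<le> j \<Longrightarrow> j \<le> m \<Longrightarrow> norm (Delta m \<theta> f j) = L"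
    and "1 \<le> k"
  shows "norm (Delta m \<theta> f k) = L"
proof -
  have "(k - 1) mod m + 1 \<le> m"
    using \<open>0 < m\<close> by (simp add: Suc_le_eq)
  then show ?thesis
    using Delta_eq_Delta_mod[OF assms(1,2,4)] equilateral by simp
qed

context
  fixes m :: nat and \<theta> :: "nat \<Rightarrow> real"
  assumes m_ge_2: "m \<ge> 2" and \<theta>_1_nonneg: "0 \<le> \<theta> 1"
    and \<theta>_increasing: "\<And>k. 1 \<le> k \<Longrightarrow> k < m \<Longrightarrow> \<theta> k < \<theta> (k + 1)"
    and \<theta>_m_less_1: "\<theta> m < 1"
begin

lemma theta_ext_less_Suc:
  assumes "1 \<le> k"
  shows "theta_ext m \<theta> k < theta_ext m \<theta> (Suc k)"
proof -
  obtain j where j: "k = Suc j"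
    using assms by (cases k) auto
  show ?thesis
  proof (cases "Suc (j mod m) = m")
    case True
    then have "Suc j mod m = 0" "Suc j div m = Suc (j div m)"
      using m_ge_2 by (simp_all add: mod_Suc div_Suc)
    then show ?thesis
      using True \<theta>_m_less_1 \<theta>_1_nonneg by (simp add: theta_ext_def j)
  next
    case False
    then have "Suc j mod m = Suc (j mod m)" "Suc j div m = j div m"
      using m_ge_2 by (simp_all add: mod_Suc div_Suc)
    moreover have "\<theta> (j mod m + 1) < \<theta> (j mod m + 1 + 1)"
    proof (rule \<theta>_increasing)
      have "j mod m < m"
        using m_ge_2 by simp
      then show "j mod m + 1 < m"
        using False by simp
    qed simp
    ultimately show ?thesis
      by (simp add: theta_ext_def j)
  qed
qed

lemma theta_ext_mono:
  assumes "1 \<le> p" "p \<le> q"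
  shows "theta_ext m \<theta> p \<le> theta_ext m \<theta> q"
  using \<open>p \<le> q\<close>
proof (induction q rule: dec_induct)
  case (step n)
  then show ?case
    using theta_ext_less_Suc[of n] \<open>1 \<le> p\<close> by simp
qed simp

lemma theta_ext_add_2_le:
  assumes "1 \<le> k"
  shows "theta_ext m \<theta> (k + 2) \<le> theta_ext m \<theta> k + 1"
proof -
  have "theta_ext m \<theta> (k + 2) \<le> theta_ext m \<theta> (k + m * 1)"
    using assms m_ge_2 by (intro theta_ext_mono) simp_all
  also have "\<dots> = theta_ext m \<theta> k + 1"
    using theta_ext_add_mult[of m k \<theta> 1] assms m_ge_2 by simp
  finally show ?thesis .
qed

end

theorem mainTheorem4:
  fixes f g :: "real \<Rightarrow> real ^ 'n" and m :: nat and \<theta> :: "nat \<Rightarrow> real"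
  assumes hf: "H32_with_deriv f g"
    and hm: "m \<ge> 2"
    and h0: "0 \<le> \<theta> 1"
    and hinc: "\<And>k. 1 \<le> k \<Longrightarrow> k < m \<Longrightarrow> \<theta> k < \<theta> (k + 1)"
    and h1: "\<theta> m < 1"
    and heq: "\<And>k. 1 \<le> k \<Longrightarrow> k \<le> m \<Longrightarrow>
               norm (Delta m \<theta> f k) = (\<Sum>j = 1..m. norm (Delta m \<theta> f j)) / real m"
  shows "\<forall>i \<ge> 1. norm (Delta m \<theta> f i - Delta m \<theta> f (i + 1))
           \<le> 2 * (theta_ext m \<theta> (i + 2) - theta_ext m \<theta> i)
               * H12_seminorm (theta_ext m \<theta> i) (theta_ext m \<theta> (i + 2)) g"
proof (intro allI impI)
  fix i :: nat
  assume "i \<ge> 1"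
  have f_per: "periodic_fun_simple' f" and g_per: "periodic_fun_simple' g"
    and g_meas: "g \<in> borel_measurable borel" and torus: "H12_torus_sq g < \<infinity>"
    and f_integral: "\<And>p q. p \<le> q \<Longrightarrow> (g has_integral (f q - f p)) {p..q}"
    using hf by (simp_all add: H32_with_deriv_def periodic_fun_simple'_def)
  define a b c where "a = theta_ext m \<theta> i" and "b = theta_ext m \<theta> (i + 1)"
    and "c = theta_ext m \<theta> (i + 2)"
  have "a < b" "b < c" "c - a \<le> 1"
    using theta_ext_less_Suc[OF hm h0 hinc h1, of i] theta_ext_less_Suc[OF hm h0 hinc h1, of "i + 1"]
      theta_ext_add_2_le[OF hm h0 hinc h1 \<open>i \<ge> 1\<close>] \<open>i \<ge> 1\<close>
    by (simp_all add: a_def b_def c_def)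
  have "norm (Delta m \<theta> f i) = norm (Delta m \<theta> f (i + 1))"
    using norm_Delta_eq_if_equilateral[OF f_per _ heq, of i]
      norm_Delta_eq_if_equilateral[OF f_per _ heq, of "i + 1"] hm \<open>i \<ge> 1\<close>
    by simp
  then have "norm (f b - f a) = norm (f c - f b)"
    by (simp add: Delta_def a_def b_def c_def numeral_2_eq_2)
  then have "norm ((f b - f a) - (f c - f b)) \<le> (c - a) * H12_seminorm a c g"
    using \<open>a < b\<close> \<open>b < c\<close> \<open>c - a \<le> 1\<close>
    by (intro norm_second_difference_le_H12_seminorm g_meas f_integral
        H12_sq_less_top_if_periodic g_per torus) simp_all
  also have "\<dots> \<le> 2 * (c - a) * H12_seminorm a c g"
    using \<open>a < b\<close> \<open>b < c\<close> by (intro mult_right_mono) (simp_all add: H12_seminorm_def)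
  finally show "norm (Delta m \<theta> f i - Delta m \<theta> f (i + 1))
      \<le> 2 * (theta_ext m \<theta> (i + 2) - theta_ext m \<theta> i)
        * H12_seminorm (theta_ext m \<theta> i) (theta_ext m \<theta> (i + 2)) g"
    by (simp add: Delta_def a_def b_def c_def numeral_2_eq_2)
qed

end
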